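(* Let $B=(b_{ij})$ be an $n\times n$ integer matrix and let $d_1,\dots,d_n$ be integers such that $b_{ij}d_j=-b_{ji}d_i$ for all $i,j$. Fix $k\in\{1,\dots,n\}$ and assume every entry $b_{kj}$ ($j=1,\dots,n$) of the $k$-th row of $B$ is divisible by $d_k$. Let $l\in\{1,\dots,n\}$ and let $B'=\mu_l(B)$ be the matrix mutation of $B$ in direction $l$. Then every entry $b'_{kj}$ of the $k$-th row of $B'$ is divisible by $d_k$.
   Context: Matrix mutation in direction $l$: $B'=\mu_l(B)$ has entries $b'_{ij}=-b_{ij}$ if $i=l$ or $j=l$, and $b'_{ij}=b_{ij}+\frac{|b_{il}|b_{lj}+b_{il}|b_{lj}|}{2}$ otherwise. *)

theory Defs
  imports "HOL-Analysis.Analysis"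
begin

text \<open>Matrix mutation in direction l. The numerator |b_il| b_lj + b_il |b_lj|
  is always even, so integer division by 2 is exact.\<close>
definition mutate :: "int ^'n ^'n \<Rightarrow> 'n \<Rightarrow> int ^'n ^'n" where
  "mutate B l = (\<chi> i j. if i = l \<or> j = l then - (B $ i $ j)
     else B $ i $ j + (\<bar>B $ i $ l\<bar> * B $ l $ j + B $ i $ l * \<bar>B $ l $ j\<bar>) div 2)"

end

theory Submission
  imports Defs
begin

text \<open>The correction term (|a| b + a |b|)/2 is a b when a, b > 0, - a b when a, b < 0, and 0
  otherwise, so b'_kj is b_kj plus a multiple of b_kl and both are divisible by d_k.\<close>

lemma mutation_term_cases:
  fixes a b :: int
  shows "(\<bar>a\<bar> * b + a * \<bar>b\<bar>) div 2 =
    (if 0 < a \<and> 0 < b then a * b else if a < 0 \<and> b < 0 then - (a * b) else 0)"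
  by (cases "0 \<le> a"; cases "0 \<le> b") (auto simp: abs_if mult.commute[of b])

lemma dvd_mutation_term:
  fixes a b :: int
  shows "a dvd (\<bar>a\<bar> * b + a * \<bar>b\<bar>) div 2"
  by (simp add: mutation_term_cases)

lemma mutate_entry:
  "mutate B l $ i $ j = (if i = l \<or> j = l then - (B $ i $ j)
     else B $ i $ j + (\<bar>B $ i $ l\<bar> * B $ l $ j + B $ i $ l * \<bar>B $ l $ j\<bar>) div 2)"
  by (simp add: mutate_def)

theorem mainTheorem1:
  fixes B :: "int ^'n ^'n" and d :: "'n \<Rightarrow> int" and k l :: 'n
  assumes skew: "\<And>i j. B $ i $ j * d j = - (B $ j $ i * d i)"
    and row: "\<And>j. d k dvd B $ k $ j"
  shows "\<forall>j. d k dvd (mutate B l) $ k $ j"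
proof
  fix j
  have "d k dvd (\<bar>B $ k $ l\<bar> * B $ l $ j + B $ k $ l * \<bar>B $ l $ j\<bar>) div 2"
    using row dvd_mutation_term by (rule dvd_trans)
  then show "d k dvd (mutate B l) $ k $ j"
    using row by (simp add: mutate_entry)
qed

end
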